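(* Let $\mathcal{G}=\langle\mathcal{Q},\mathbf{f}\rangle$ be a monotone NEP satisfying Assumption 2 with nonempty solution set $\mathrm{SOL}(\mathcal{Q},\mathbf{f})$ (its set of Nash equilibria). Let $\phi:\mathbb{R}^n\to\mathbb{R}$ satisfy: (i) $\phi$ is continuously differentiable and convex on $\mathcal{Q}$; (ii) the level sets of $\phi$ on $\mathrm{SOL}(\mathcal{Q},\mathbf{f})$ are bounded; (iii) $\nabla\phi$ is Lipschitz continuous on $\mathcal{Q}$ with constant $L_\phi$. Let $\tau>0$ be large enough that every game $\mathcal{G}_{\tau,\varepsilon^{(n)},\mathbf{x}^{(n)}}$ below is a P$_{\boldsymbol\Upsilon}$ NEP, and let $\varepsilon^{(n)}>0$ with $\varepsilon^{(n)}\downarrow0$ and $\sum_{n=0}^\infty\varepsilon^{(n)}=\infty$. Define $\mathbf{x}^{(0)}\in\mathcal{Q}$ and, for $n\ge0$, $\mathbf{x}^{(n+1)}$ = the (unique) NE of $\mathcal{G}_{\tau,\varepsilon^{(n)},\mathbf{x}^{(n)}}$. Then the sequence $\{\mathbf{x}^{(n)}\}$ is well defined and bounded, and every limit point of it solves $\min\{\phi(\mathbf{x}):\mathbf{x}\in\mathrm{SOL}(\mathcal{Q},\mathbf{f})\}$.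
   Context: Real NEP: player $i$ chooses $\mathbf{x}_i\in\mathcal{Q}_i\subseteq\mathbb{R}^{n_i}$ minimizing $f_i(\mathbf{x}_i,\mathbf{x}_{-i})$; $\mathcal{Q}=\prod_i\mathcal{Q}_i$. NE: $\mathbf{x}^\star\in\mathcal{Q}$ with $f_i(\mathbf{x}^\star_i,\mathbf{x}^\star_{-i})\le f_i(\mathbf{x}_i,\mathbf{x}^\star_{-i})$ for all $\mathbf{x}_i\in\mathcal{Q}_i$, all $i$. Assumption 1: $\mathcal{Q}_i$ nonempty closed convex, $f_i$ continuously differentiable on $\mathcal{Q}$, convex in $\mathbf{x}_i$. Assumption 2: $f_i$ twice continuously differentiable with bounded derivatives on $\mathcal{Q}$. Monotone NEP: Assumption 1 and $\mathbf{F}=(\nabla_{\mathbf{x}_i}f_i)_i$ monotone on $\mathcal{Q}$. $\mathcal{G}_{\tau,\varepsilon,\mathbf{y}}$: the game in which player $i$ minimizes $f_i(\mathbf{x}_i,\mathbf{x}_{-i})+\varepsilon\phi(\mathbf{x}_i,\mathbf{x}_{-i})+\frac\tau2\|\mathbf{x}_i-\mathbf{y}_i\|^2$ over $\mathcal{Q}_i$. P$_{\boldsymbol\Upsilon}$ NEP: Assumptions 1–2 hold and the $I\times I$ matrix with diagonal $\inf_{\mathcal{Q}}\lambda_{\rm least}(\mathbf{J}_i\mathbf{G}_i)$ and off-diagonal $-\sup_{\mathcal{Q}}\|\mathbf{J}_j\mathbf{G}_i\|_2$ (where $\mathbf{G}_i$ is the gradient of player $i$'s cost w.r.t. $\mathbf{x}_i$,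 $\lambda_{\rm least}(\mathbf{A})$ the smallest eigenvalue of $(\mathbf{A}+\mathbf{A}^T)/2$) is a P-matrix. *)

theory Defs
  imports "HOL-Analysis.Analysis"
begin

text \<open>Players are the elements of a finite type 'p; the joint strategy space is
  real^'n; the map blk assigns to each coordinate the player owning it, so the
  block of player i is the copy of R^(n_i) consisting of the coordinates k with
  blk k = i.  Player strategy sets Q_i are subsets of that block subspace.\<close>

definition block_set :: "('n::finite \<Rightarrow> 'p) \<Rightarrow> 'p \<Rightarrow> (real^'n) set" where
  "block_set blk i = {y. \<forall>k. blk k \<noteq> i \<longrightarrow> y $ k = 0}"

definition proj :: "('n::finite \<Rightarrow> 'p) \<Rightarrow> 'p \<Rightarrow> real^'n \<Rightarrow> real^'n" where
  "proj blk i x = (\<chi> k. if blk k = i then x $ k else 0)"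

definition upd :: "('n::finite \<Rightarrow> 'p) \<Rightarrow> real^'n \<Rightarrow> 'p \<Rightarrow> real^'n \<Rightarrow> real^'n" where
  "upd blk x i y = (\<chi> k. if blk k = i then y $ k else x $ k)"

definition prodQ :: "('n::finite \<Rightarrow> 'p) \<Rightarrow> ('p \<Rightarrow> (real^'n) set) \<Rightarrow> (real^'n) set" where
  "prodQ blk Qi = {x. \<forall>i. proj blk i x \<in> Qi i}"

definition is_NE :: "('n::finite \<Rightarrow> 'p) \<Rightarrow> ('p \<Rightarrow> (real^'n) set) \<Rightarrow> ('p \<Rightarrow> real^'n \<Rightarrow> real)
    \<Rightarrow> real^'n \<Rightarrow> bool" where
  "is_NE blk Qi f x \<longleftrightarrow> x \<in> prodQ blk Qi \<and>
     (\<forall>i. \<forall>y \<in> Qi i. f i x \<le> f i (upd blk x i y))"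

definition SOL :: "('n::finite \<Rightarrow> 'p) \<Rightarrow> ('p \<Rightarrow> (real^'n) set) \<Rightarrow> ('p \<Rightarrow> real^'n \<Rightarrow> real)
    \<Rightarrow> (real^'n) set" where
  "SOL blk Qi f = {x. is_NE blk Qi f x}"

definition has_grads :: "(real^'n::finite) set \<Rightarrow> ('p \<Rightarrow> real^'n \<Rightarrow> real)
    \<Rightarrow> ('p \<Rightarrow> real^'n \<Rightarrow> real^'n) \<Rightarrow> bool" where
  "has_grads U f gg \<longleftrightarrow>
     (\<forall>i. \<forall>x\<in>U. (f i has_derivative (\<lambda>h. gg i x \<bullet> h)) (at x)) \<and>
     (\<forall>i. continuous_on U (gg i))"

text \<open>F(x) = (grad_{x_i} f_i(x))_i, assembled from full gradients\<close>
definition pseudo_grad :: "('n::finite \<Rightarrow> 'p) \<Rightarrow> ('p \<Rightarrow> real^'n \<Rightarrow> real^'n) \<Rightarrow> real^'n \<Rightarrow> real^'n" where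
  "pseudo_grad blk gg x = (\<chi> k. gg (blk k) x $ k)"

definition Assumption1 :: "('n::finite \<Rightarrow> 'p) \<Rightarrow> ('p \<Rightarrow> (real^'n) set) \<Rightarrow> ('p \<Rightarrow> real^'n \<Rightarrow> real) \<Rightarrow> bool" where
  "Assumption1 blk Qi f \<longleftrightarrow>
     (\<forall>i. Qi i \<noteq> {} \<and> closed (Qi i) \<and> convex (Qi i) \<and> Qi i \<subseteq> block_set blk i) \<and>
     (\<exists>U gg. open U \<and> prodQ blk Qi \<subseteq> U \<and> has_grads U f gg) \<and>
     (\<forall>i. \<forall>x \<in> prodQ blk Qi. convex_on (Qi i) (\<lambda>y. f i (upd blk x i y)))"

definition has_grads_hess :: "(real^'n::finite) set \<Rightarrow> ('p \<Rightarrow> real^'n \<Rightarrow> real)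
    \<Rightarrow> ('p \<Rightarrow> real^'n \<Rightarrow> real^'n) \<Rightarrow> ('p \<Rightarrow> real^'n \<Rightarrow> real^'n^'n) \<Rightarrow> bool" where
  "has_grads_hess U f gg Hf \<longleftrightarrow> has_grads U f gg \<and>
     (\<forall>i. \<forall>x\<in>U. (gg i has_derivative (\<lambda>h. Hf i x *v h)) (at x)) \<and>
     (\<forall>i. continuous_on U (Hf i))"

definition Assumption2 :: "('n::finite \<Rightarrow> 'p) \<Rightarrow> ('p \<Rightarrow> (real^'n) set) \<Rightarrow> ('p \<Rightarrow> real^'n \<Rightarrow> real) \<Rightarrow> bool" where
  "Assumption2 blk Qi f \<longleftrightarrow>
     (\<exists>U gg Hf. open U \<and> prodQ blk Qi \<subseteq> U \<and> has_grads_hess U f gg Hf \<and>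
        (\<forall>i. bounded (gg i ` prodQ blk Qi) \<and> bounded (Hf i ` prodQ blk Qi)))"

definition monotone_NEP :: "('n::finite \<Rightarrow> 'p) \<Rightarrow> ('p \<Rightarrow> (real^'n) set) \<Rightarrow> ('p \<Rightarrow> real^'n \<Rightarrow> real) \<Rightarrow> bool" where
  "monotone_NEP blk Qi f \<longleftrightarrow> Assumption1 blk Qi f \<and>
     (\<exists>U gg. open U \<and> prodQ blk Qi \<subseteq> U \<and> has_grads U f gg \<and>
        (\<forall>x \<in> prodQ blk Qi. \<forall>y \<in> prodQ blk Qi.
            0 \<le> (pseudo_grad blk gg x - pseudo_grad blk gg y) \<bullet> (x - y)))"

text \<open>lambda_least of the diagonal block (i,i) of a matrix A: the smallest eigenvalue of
  the symmetric part of the n_i x n_i submatrix (rows and columns in block i).\<close>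
definition lambda_least_block :: "('n::finite \<Rightarrow> 'p) \<Rightarrow> 'p \<Rightarrow> real^'n^'n \<Rightarrow> real" where
  "lambda_least_block blk i A =
     Inf {lam. \<exists>v. v \<in> block_set blk i \<and> v \<noteq> 0 \<and>
          proj blk i (((1/2) *\<^sub>R (A + transpose A)) *v v) = lam *\<^sub>R v}"

definition block_norm :: "('n::finite \<Rightarrow> 'p) \<Rightarrow> 'p \<Rightarrow> 'p \<Rightarrow> real^'n^'n \<Rightarrow> real" where
  "block_norm blk i j A = onorm (\<lambda>v. proj blk i (A *v proj blk j v))"

definition principal_minor :: "real^'p^'p \<Rightarrow> 'p set \<Rightarrow> real" where
  "principal_minor M S =
     (\<Sum>p \<in> {p. p permutes S}. of_int (sign p) * (\<Prod>i\<in>S. M $ i $ p i))"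

definition P_matrix :: "real^'p::finite^'p \<Rightarrow> bool" where
  "P_matrix M \<longleftrightarrow> (\<forall>S. S \<noteq> {} \<longrightarrow> principal_minor M S > 0)"

text \<open>The Upsilon matrix built from the Hessians Hf i of the costs
  (J_j G_i is the (i,j) block of the Hessian of f_i)\<close>
definition Upsilon :: "('n::finite \<Rightarrow> 'p::finite) \<Rightarrow> ('p \<Rightarrow> (real^'n) set)
    \<Rightarrow> ('p \<Rightarrow> real^'n \<Rightarrow> real^'n^'n) \<Rightarrow> real^'p^'p" where
  "Upsilon blk Qi Hf = (\<chi> i j. if i = j
       then (INF x \<in> prodQ blk Qi. lambda_least_block blk i (Hf i x))
       else - (SUP x \<in> prodQ blk Qi. block_norm blk i j (Hf i x)))"

definition PUps_NEP :: "('n::finite \<Rightarrow> 'p::finite) \<Rightarrow> ('p \<Rightarrow> (real^'n) set) \<Rightarrow> ('p \<Rightarrow> real^'n \<Rightarrow> real) \<Rightarrow> bool" where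
  "PUps_NEP blk Qi f \<longleftrightarrow> Assumption1 blk Qi f \<and> Assumption2 blk Qi f \<and>
     (\<exists>U gg Hf. open U \<and> prodQ blk Qi \<subseteq> U \<and> has_grads_hess U f gg Hf \<and>
        P_matrix (Upsilon blk Qi Hf))"

definition pert_game :: "('n::finite \<Rightarrow> 'p) \<Rightarrow> ('p \<Rightarrow> real^'n \<Rightarrow> real) \<Rightarrow> (real^'n \<Rightarrow> real)
    \<Rightarrow> real \<Rightarrow> real \<Rightarrow> real^'n \<Rightarrow> 'p \<Rightarrow> real^'n \<Rightarrow> real" where
  "pert_game blk f phi tau eps y = (\<lambda>i x. f i x + eps * phi x
       + tau / 2 * (norm (proj blk i x - proj blk i y))^2)"

end

theory Submission
  imports Defs
begin

text \<open>Nash equilibria of these games are exactly the solutions of the variational inequality (VI)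
  of the pseudo-gradient \<open>F\<close>, so \<open>x(n+1)\<close> is the solution of the VI of the strongly monotone map
  \<open>F + e\<^sub>n \<nabla>phi + tau (\<cdot> - x(n))\<close>, which exists by Brouwer's theorem and is unique.
  Assumption 2 for the perturbed games forces \<open>Q\<close> to be bounded, hence compact.
  Let \<open>S\<close> be the set of minimizers of \<open>phi\<close> on \<open>SOL\<close>. Testing the VI of step \<open>n\<close> at the point
  of \<open>S\<close> nearest to \<open>x(n)\<close> gives
  \<open>d(x(n+1),S)\<^sup>2 \<le> d(x(n),S)\<^sup>2 - |x(n+1) - x(n)|\<^sup>2 - 2 e\<^sub>n / tau (phi(x(n+1)) - min phi)\<close>;
  by compactness, eventually every step either lands near \<open>S\<close> or decreases \<open>d\<^sup>2\<close> by a fixed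
  multiple of \<open>e\<^sub>n\<close>, and as \<open>\<Sum> e\<^sub>n = \<infinity>\<close> the distance to \<open>S\<close> tends to \<open>0\<close>.\<close>

lemma has_derivative_right_quotient:
  fixes c :: "'a::real_normed_vector \<Rightarrow> real"
  assumes "(c has_derivative D) (at a)"
  shows "((\<lambda>t. (c (a + t *\<^sub>R d) - c a) / t) \<longlongrightarrow> D d) (at_right 0)"
proof -
  have "((\<lambda>t. a + t *\<^sub>R d) has_derivative (\<lambda>t. t *\<^sub>R d)) (at 0)"
    by (auto intro!: derivative_eq_intros)
  then have "((\<lambda>t. c (a + t *\<^sub>R d)) has_derivative (\<lambda>t. D (t *\<^sub>R d))) (at 0)"
    using has_derivative_compose[of "\<lambda>t. a + t *\<^sub>R d" _ 0 UNIV c D] assms by simp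
  moreover have "(\<lambda>t. D (t *\<^sub>R d)) = (*) (D d)"
    using assms has_derivative_linear by (fastforce simp: linear_scale)
  ultimately have "((\<lambda>t. c (a + t *\<^sub>R d)) has_field_derivative D d) (at 0)"
    by (simp add: has_field_derivative_def)
  then have "((\<lambda>t. (c (a + t *\<^sub>R d) - c a) / (t - 0)) \<longlongrightarrow> D d) (at 0)"
    using has_field_derivative_iff[THEN iffD1] by fastforce
  then show ?thesis
    by (simp add: filterlim_at_split)
qed

lemma eventually_at_right_0_lt_1: "\<forall>\<^sub>F t in at_right (0::real). 0 < t \<and> t < 1"
  by (simp add: eventually_at_right_less eventually_conj eventually_at_right_field exI[of _ 1])

lemma convex_on_gradient_ineq:
  fixes c :: "'a::real_normed_vector \<Rightarrow> real"
  assumes cv: "convex_on C c" and a: "a \<in> C" and b: "b \<in> C"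
    and d: "(c has_derivative D) (at a)"
  shows "D (b - a) \<le> c b - c a"
proof (rule tendsto_upperbound[OF has_derivative_right_quotient[OF d]])
  show "\<forall>\<^sub>F t in at_right 0. (c (a + t *\<^sub>R (b - a)) - c a) / t \<le> c b - c a"
    using eventually_at_right_0_lt_1
  proof (rule eventually_mono)
    fix t :: real assume t: "0 < t \<and> t < 1"
    have "c ((1 - t) *\<^sub>R a + t *\<^sub>R b) \<le> (1 - t) * c a + t * c b"
      using cv a b t by (intro convex_onD) auto
    moreover have "a + t *\<^sub>R (b - a) = (1 - t) *\<^sub>R a + t *\<^sub>R b" by (simp add: algebra_simps)
    ultimately have "c (a + t *\<^sub>R (b - a)) - c a \<le> t * (c b - c a)"
      by (simp add: algebra_simps)
    then show "(c (a + t *\<^sub>R (b - a)) - c a) / t \<le> c b - c a"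
      using t by (simp add: divide_le_eq mult.commute)
  qed
qed simp

lemma min_on_convex_derivative_nonneg:
  fixes c :: "'a::real_normed_vector \<Rightarrow> real"
  assumes C: "convex C" and a: "a \<in> C" and b: "b \<in> C" and min: "\<forall>y\<in>C. c a \<le> c y"
    and d: "(c has_derivative D) (at a)"
  shows "0 \<le> D (b - a)"
proof (rule tendsto_lowerbound[OF has_derivative_right_quotient[OF d]])
  show "\<forall>\<^sub>F t in at_right 0. 0 \<le> (c (a + t *\<^sub>R (b - a)) - c a) / t"
    using eventually_at_right_0_lt_1
  proof (rule eventually_mono)
    fix t :: real assume t: "0 < t \<and> t < 1"
    have "(1 - t) *\<^sub>R a + t *\<^sub>R b \<in> C" using C a b t by (intro convexD) auto
    moreover have "a + t *\<^sub>R (b - a) = (1 - t) *\<^sub>R a + t *\<^sub>R b" by (simp add: algebra_simps)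
    ultimately show "0 \<le> (c (a + t *\<^sub>R (b - a)) - c a) / t" using min t by auto
  qed
qed simp

lemma has_derivative_inner_unique:
  assumes "(h has_derivative (\<lambda>v. a \<bullet> v)) (at x)" and "(h has_derivative (\<lambda>v. b \<bullet> v)) (at x)"
  shows "a = b"
  using has_derivative_unique[OF assms] vector_eq_rdot by metis

lemma subgradient_monotone:
  assumes "\<forall>a\<in>Q. \<forall>b\<in>Q. P a \<bullet> (b - a) \<le> phi b - phi a" and "a \<in> Q" "b \<in> Q"
  shows "0 \<le> (P a - P b) \<bullet> (a - b)"
proof -
  have "P a \<bullet> (b - a) \<le> phi b - phi a" "P b \<bullet> (a - b) \<le> phi a - phi b"
    using assms by auto
  then show ?thesis by (simp add: inner_diff_left inner_diff_right inner_commute)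
qed

definition VI_sol :: "'a::real_inner set \<Rightarrow> ('a \<Rightarrow> 'a) \<Rightarrow> 'a set" where
  "VI_sol Q G = {x \<in> Q. \<forall>z\<in>Q. 0 \<le> G x \<bullet> (z - x)}"

lemma closed_VI_sol:
  assumes "closed Q" and "continuous_on Q G"
  shows "closed (VI_sol Q G)"
proof -
  have eq: "VI_sol Q G = Q \<inter> (\<Inter>z\<in>Q. Q \<inter> (\<lambda>x. G x \<bullet> (z - x)) -` {0..})"
    unfolding VI_sol_def by auto
  have "closed (Q \<inter> (\<lambda>x. G x \<bullet> (z - x)) -` {0..})" for z
    using assms by (intro continuous_closed_preimage continuous_intros) auto
  then show ?thesis unfolding eq using assms(1) by (intro closed_Int closed_INT) auto
qed

lemma VI_sol_nonempty:
  fixes G :: "'a::euclidean_space \<Rightarrow> 'a"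
  assumes Q: "compact Q" "convex Q" "Q \<noteq> {}" and G: "continuous_on Q G"
  shows "VI_sol Q G \<noteq> {}"
proof -
  have "closed Q" using Q compact_imp_closed by blast
  define T where "T x = closest_point Q (x - G x)" for x
  have "continuous_on Q T"
    unfolding T_def
    by (rule continuous_on_compose2[OF continuous_on_closest_point[OF Q(2) \<open>closed Q\<close> Q(3)],
          of _ "\<lambda>x. x - G x" UNIV])
       (auto intro!: continuous_intros G)
  moreover have "T \<in> Q \<rightarrow> Q" unfolding T_def using closest_point_in_set[OF \<open>closed Q\<close> Q(3)] by blast
  ultimately obtain y where y: "y \<in> Q" "T y = y" using brouwer[OF Q] by blast
  have "0 \<le> G y \<bullet> (z - y)" if "z \<in> Q" for z
    using closest_point_dot[OF Q(2) \<open>closed Q\<close> that, of "y - G y"] y(2) unfolding T_def by simp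
  then show ?thesis using y(1) unfolding VI_sol_def by blast
qed

lemma VI_sol_unique:
  assumes tau: "tau > 0"
    and strong: "\<forall>a\<in>Q. \<forall>b\<in>Q. tau * norm (a - b)^2 \<le> (G a - G b) \<bullet> (a - b)"
    and "a \<in> VI_sol Q G" "b \<in> VI_sol Q G"
  shows "a = b"
proof -
  have "a \<in> Q" "b \<in> Q" "0 \<le> G a \<bullet> (b - a)" "0 \<le> G b \<bullet> (a - b)"
    using assms(3,4) unfolding VI_sol_def by auto
  then have "tau * norm (a - b)^2 \<le> 0"
    using strong by (smt (verit) inner_diff_left inner_diff_right inner_commute)
  then show ?thesis using tau by (simp add: mult_le_0_iff)
qed

lemma strongly_monotone_regularized:
  fixes F P :: "'a::real_inner \<Rightarrow> 'a"
  assumes "\<forall>a\<in>Q. \<forall>b\<in>Q. 0 \<le> (F a - F b) \<bullet> (a - b)"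
    and "\<forall>a\<in>Q. \<forall>b\<in>Q. 0 \<le> (P a - P b) \<bullet> (a - b)" and "e \<ge> 0"
  shows "\<forall>a\<in>Q. \<forall>b\<in>Q. tau * norm (a - b)^2 \<le>
    ((F a + e *\<^sub>R P a + tau *\<^sub>R (a - y)) - (F b + e *\<^sub>R P b + tau *\<^sub>R (b - y))) \<bullet> (a - b)"
proof (intro ballI)
  fix a b assume "a \<in> Q" "b \<in> Q"
  then have "0 \<le> (F a - F b) \<bullet> (a - b)" "0 \<le> e * ((P a - P b) \<bullet> (a - b))"
    using assms by auto
  moreover have "((F a + e *\<^sub>R P a + tau *\<^sub>R (a - y)) - (F b + e *\<^sub>R P b + tau *\<^sub>R (b - y))) \<bullet> (a - b)
      = (F a - F b) \<bullet> (a - b) + e * ((P a - P b) \<bullet> (a - b)) + tau * norm (a - b)^2"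
    by (simp add: algebra_simps inner_diff_left power2_norm_eq_inner)
  ultimately show "tau * norm (a - b)^2 \<le>
    ((F a + e *\<^sub>R P a + tau *\<^sub>R (a - y)) - (F b + e *\<^sub>R P b + tau *\<^sub>R (b - y))) \<bullet> (a - b)"
    by linarith
qed

lemma VI_sol_subset: "VI_sol Q G \<subseteq> Q"
  unfolding VI_sol_def by blast

lemma descent_telescope:
  fixes a e :: "nat \<Rightarrow> real"
  assumes "\<And>n. n \<ge> N \<Longrightarrow> a (Suc n) \<le> a n - c * e n" and "M \<ge> N"
  shows "a M \<le> a N - c * (\<Sum>n\<in>{N..<M}. e n)"
  using \<open>M \<ge> N\<close>
proof (induction M rule: dec_induct)
  case (step k)
  then show ?case using assms(1)[of k] by (simp add: algebra_simps)
qed simp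

text \<open>Once below \<open>d\<close> the sequence stays there, and the decrease cannot go on forever.\<close>
lemma eventually_below_of_descent:
  fixes a e :: "nat \<Rightarrow> real"
  assumes a_nonneg: "\<And>n. 0 \<le> a n" and c: "c > 0" and e_nonneg: "\<And>n. 0 \<le> e n"
    and descent: "\<And>n. n \<ge> N \<Longrightarrow> a (Suc n) < d \<or> a (Suc n) \<le> a n - c * e n"
    and diverge: "filterlim (\<lambda>M. \<Sum>n<M. e n) at_top sequentially"
  shows "\<exists>M. \<forall>n\<ge>M. a n < d"
proof (cases "\<exists>m\<ge>N. a m < d")
  case True
  then obtain m where m: "m \<ge> N" "a m < d" by blast
  have "a n < d" if "n \<ge> m" for n
    using that
  proof (induction n rule: dec_induct)
    case (step k)
    have "0 \<le> c * e k" using c e_nonneg[of k] by simp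
    then show ?case using descent[of k] step m by linarith
  qed (use m in simp)
  then show ?thesis by blast
next
  case False
  then have "a (Suc n) \<le> a n - c * e n" if "n \<ge> N" for n
    using descent[OF that] that by (meson le_SucI not_less)
  then have tel: "a M \<le> a N - c * (\<Sum>n\<in>{N..<M}. e n)" if "M \<ge> N" for M
    using descent_telescope that by blast
  have "\<forall>\<^sub>F M in sequentially. (\<Sum>n<M. e n) > a N / c + (\<Sum>n<N. e n)"
    using diverge by (simp add: filterlim_at_top_dense)
  then obtain M0 where M0: "\<forall>M\<ge>M0. (\<Sum>n<M. e n) > a N / c + (\<Sum>n<N. e n)"
    by (auto simp: eventually_sequentially)
  define M where "M = max M0 N"
  have "(\<Sum>n<M. e n) = (\<Sum>n<N. e n) + (\<Sum>n\<in>{N..<M}. e n)"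
    unfolding M_def by (metis lessThan_atLeast0 max.cobounded2 sum.atLeastLessThan_concat zero_le)
  moreover have "(\<Sum>n<M. e n) > a N / c + (\<Sum>n<N. e n)" using M0 by (simp add: M_def)
  ultimately have "a N < c * (\<Sum>n\<in>{N..<M}. e n)"
    using c by (simp add: field_simps)
  then have "a M < 0" using tel[of M] by (simp add: M_def)
  then show ?thesis using a_nonneg by (meson not_le)
qed

lemma ex1_recursive_sequence:
  assumes "x0 \<in> Q" and ex1: "\<And>n y. y \<in> Q \<Longrightarrow> \<exists>!y'. R n y y'"
    and closed: "\<And>n y y'. R n y y' \<Longrightarrow> y' \<in> Q"
  shows "\<exists>!x. x 0 = x0 \<and> (\<forall>n. R n (x n) (x (Suc n)))"
proof
  define x where "x = rec_nat x0 (\<lambda>n y. THE y'. R n y y')"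
  have x_Suc: "x (Suc n) = (THE y'. R n (x n) y')" for n by (simp add: x_def)
  have "x n \<in> Q \<and> R n (x n) (x (Suc n))" for n
  proof (induction n)
    case 0
    show ?case using theI'[OF ex1[OF \<open>x0 \<in> Q\<close>]] assms(1) by (simp add: x_def)
  next
    case (Suc n)
    then have "x (Suc n) \<in> Q" using closed by blast
    then show ?case unfolding x_Suc[of "Suc n"] using theI'[OF ex1] by blast
  qed
  then show "x 0 = x0 \<and> (\<forall>n. R n (x n) (x (Suc n)))" by (simp add: x_def)
  fix y assume y: "y 0 = x0 \<and> (\<forall>n. R n (y n) (y (Suc n)))"
  show "y = x"
  proof
    fix n show "y n = x n"
    proof (induction n)
      case (Suc n)
      then show ?case using y \<open>\<And>n. x n \<in> Q \<and> R n (x n) (x (Suc n))\<close> ex1 by metis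
    qed (use y in \<open>simp add: x_def\<close>)
  qed
qed

lemma regularized_step_dist_ineq:
  fixes F P :: "'a::real_inner \<Rightarrow> 'a"
  assumes tau: "tau > 0" and e: "e \<ge> 0"
    and step: "0 \<le> (F y + e *\<^sub>R P y + tau *\<^sub>R (y - x)) \<bullet> (w - y)"
    and mono: "0 \<le> (F y - F w) \<bullet> (y - w)"
    and sol: "0 \<le> F w \<bullet> (y - w)"
    and subgrad: "P y \<bullet> (w - y) \<le> phi w - phi y"
  shows "norm (y - w)^2 \<le> norm (x - w)^2 - norm (y - x)^2 - 2 * e / tau * (phi y - phi w)"
proof -
  have "F y \<bullet> (w - y) \<le> 0"
    using mono sol by (simp add: inner_diff_left inner_diff_right inner_commute)
  moreover have "e * (P y \<bullet> (w - y)) \<le> e * (phi w - phi y)" using e subgrad mult_left_mono by blast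
  ultimately have "e * (phi y - phi w) \<le> tau * ((y - x) \<bullet> (w - y))"
    using step by (simp add: inner_add_left algebra_simps)
  then have "2 * e / tau * (phi y - phi w) \<le> 2 * ((y - x) \<bullet> (w - y))"
    using tau by (simp add: field_simps)
  moreover have "norm (x - w)^2 = norm (y - x)^2 + norm (y - w)^2 + 2 * ((y - x) \<bullet> (w - y))"
    by (simp add: power2_norm_eq_inner algebra_simps inner_diff_left inner_diff_right inner_commute)
  ultimately show ?thesis by linarith
qed

locale regularized_prox_sequence =
  fixes Q :: "'a::euclidean_space set" and F P :: "'a \<Rightarrow> 'a" and phi :: "'a \<Rightarrow> real"
    and tau :: real and e :: "nat \<Rightarrow> real" and x :: "nat \<Rightarrow> 'a"
  assumes compact_Q: "compact Q"
    and F_cont: "continuous_on Q F" and F_mono: "\<forall>a\<in>Q. \<forall>b\<in>Q. 0 \<le> (F a - F b) \<bullet> (a - b)"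
    and phi_cont: "continuous_on Q phi" and P_cont: "continuous_on Q P"
    and subgradient: "\<forall>a\<in>Q. \<forall>b\<in>Q. P a \<bullet> (b - a) \<le> phi b - phi a"
    and VI_sol_ne: "VI_sol Q F \<noteq> {}"
    and tau_pos: "tau > 0" and e_pos: "\<And>n. e n > 0" and e_lim: "e \<longlonglongrightarrow> 0"
    and e_sum: "filterlim (\<lambda>N. \<Sum>n<N. e n) at_top sequentially"
    and x_in: "\<And>n. x n \<in> Q"
    and step: "\<And>n. x (Suc n) \<in> VI_sol Q (\<lambda>y. F y + e n *\<^sub>R P y + tau *\<^sub>R (y - x n))"
begin

definition opt :: real where "opt = (INF w\<in>VI_sol Q F. phi w)"

definition minimizers :: "'a set" where "minimizers = {w \<in> VI_sol Q F. phi w \<le> opt}"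

lemma compact_VI_sol: "compact (VI_sol Q F)"
  using compact_Int_closed[OF compact_Q closed_VI_sol[OF compact_imp_closed[OF compact_Q] F_cont]]
  by (simp add: Int_absorb1 VI_sol_subset)

lemma opt_le: "w \<in> VI_sol Q F \<Longrightarrow> opt \<le> phi w"
  unfolding opt_def
  using compact_continuous_image[OF continuous_on_subset[OF phi_cont VI_sol_subset] compact_VI_sol]
  by (intro cINF_lower) (auto intro: bounded_imp_bdd_below compact_imp_bounded)

lemma minimizers_nonempty: "minimizers \<noteq> {}"
proof -
  obtain s where "s \<in> VI_sol Q F" "\<forall>w\<in>VI_sol Q F. phi s \<le> phi w"
    using continuous_attains_inf[OF compact_VI_sol VI_sol_ne
        continuous_on_subset[OF phi_cont VI_sol_subset]] by blast
  then have "phi s \<le> opt" unfolding opt_def by (intro cINF_greatest) auto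
  then show ?thesis using \<open>s \<in> VI_sol Q F\<close> unfolding minimizers_def by blast
qed

lemma minimizers_phi: "w \<in> minimizers \<Longrightarrow> w \<in> VI_sol Q F \<and> phi w = opt"
  unfolding minimizers_def using opt_le by force

lemma closed_minimizers: "closed minimizers"
proof -
  have "minimizers = VI_sol Q F \<inter> (Q \<inter> phi -` {..opt})"
    unfolding minimizers_def using VI_sol_subset by blast
  then show ?thesis
    using closed_VI_sol[OF compact_imp_closed[OF compact_Q] F_cont]
      continuous_closed_preimage[OF phi_cont compact_imp_closed[OF compact_Q] closed_atMost]
    by auto
qed

text \<open>By compactness: a sequence of counterexamples would have a limit point in \<open>minimizers\<close>.\<close>
lemma near_solutions_near_minimizers:
  assumes "\<delta> > 0"
  obtains \<eta> where "\<eta> > 0"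
    and "\<And>y. y \<in> Q \<Longrightarrow> phi y \<le> opt + \<eta> \<Longrightarrow> \<forall>z\<in>Q. - \<eta> \<le> F y \<bullet> (z - y) \<Longrightarrow>
          infdist y minimizers < \<delta>"
proof -
  have "\<exists>\<eta>>0. \<forall>y\<in>Q. phi y \<le> opt + \<eta> \<and> (\<forall>z\<in>Q. - \<eta> \<le> F y \<bullet> (z - y)) \<longrightarrow>
          infdist y minimizers < \<delta>"
  proof (rule ccontr)
    assume "\<not> ?thesis"
    then have "\<forall>k. \<exists>y. y \<in> Q \<and> phi y \<le> opt + inverse (Suc k) \<and>
        (\<forall>z\<in>Q. - (inverse (Suc k)) \<le> F y \<bullet> (z - y)) \<and> \<delta> \<le> infdist y minimizers"
      by (metis inverse_positive_iff_positive not_less of_nat_0_less_iff zero_less_Suc)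
    then obtain y where y: "\<And>k. y k \<in> Q" "\<And>k. phi (y k) \<le> opt + inverse (Suc k)"
      "\<And>k z. z \<in> Q \<Longrightarrow> - (inverse (Suc k)) \<le> F (y k) \<bullet> (z - y k)"
      "\<And>k. \<delta> \<le> infdist (y k) minimizers"
      by metis
    obtain l r where lr: "l \<in> Q" "strict_mono r" "(y \<circ> r) \<longlonglongrightarrow> l"
      using compact_Q y(1) unfolding compact_def by meson
    have yr: "(\<lambda>k. y (r k)) \<longlonglongrightarrow> l" using lr(3) by (simp add: o_def)
    have inv: "(\<lambda>k. inverse (real (Suc (r k)))) \<longlonglongrightarrow> 0"
      using LIMSEQ_subseq_LIMSEQ[OF LIMSEQ_inverse_real_of_nat lr(2)] by (simp add: o_def)
    have cont: "(\<lambda>k. g (y (r k))) \<longlonglongrightarrow> g l" if "continuous_on Q g" for g :: "'a \<Rightarrow> 'b::topological_space"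
      using continuous_on_tendsto_compose[OF that yr lr(1)] y(1) by simp
    have "(\<lambda>k. opt + inverse (real (Suc (r k)))) \<longlonglongrightarrow> opt + 0"
      by (intro tendsto_intros inv)
    then have "phi l \<le> opt + 0"
      using y(2) by (intro LIMSEQ_le[OF cont[OF phi_cont]]) auto
    moreover have "0 \<le> F l \<bullet> (z - l)" if "z \<in> Q" for z
    proof -
      have "(\<lambda>k. F (y (r k)) \<bullet> (z - y (r k))) \<longlonglongrightarrow> F l \<bullet> (z - l)"
        by (intro tendsto_intros cont[OF F_cont] yr)
      moreover have "(\<lambda>k. - inverse (real (Suc (r k)))) \<longlonglongrightarrow> - 0"
        by (intro tendsto_intros inv)
      ultimately show ?thesis
        using y(3)[OF that] by (intro LIMSEQ_le[of "\<lambda>k. - inverse (real (Suc (r k)))"]) auto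
    qed
    ultimately have "infdist l minimizers = 0"
      using lr(1) unfolding minimizers_def VI_sol_def by auto
    moreover have "(\<lambda>k. infdist (y (r k)) minimizers) \<longlonglongrightarrow> infdist l minimizers"
      by (intro tendsto_intros yr)
    ultimately show False
      using y(4) LIMSEQ_le_const[of _ _ \<delta>] \<open>\<delta> > 0\<close> by (metis (no_types, lifting) not_le)
  qed
  then show ?thesis using that by blast
qed

lemma infdist_descent:
  "(infdist (x (Suc n)) minimizers)^2 \<le> (infdist (x n) minimizers)^2 - norm (x (Suc n) - x n)^2
     - 2 * e n / tau * (phi (x (Suc n)) - opt)"
proof -
  let ?y = "x (Suc n)"
  obtain w where w: "w \<in> minimizers" "infdist (x n) minimizers = dist (x n) w"
    using infdist_attains_inf[OF closed_minimizers minimizers_nonempty] by blast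
  then have wV: "w \<in> VI_sol Q F" "phi w = opt" and wQ: "w \<in> Q"
    using minimizers_phi VI_sol_subset by blast+
  have "norm (?y - w)^2 \<le> norm (x n - w)^2 - norm (?y - x n)^2 - 2 * e n / tau * (phi ?y - phi w)"
  proof (rule regularized_step_dist_ineq[OF tau_pos less_imp_le[OF e_pos]])
    show "0 \<le> (F ?y + e n *\<^sub>R P ?y + tau *\<^sub>R (?y - x n)) \<bullet> (w - ?y)"
      using step[of n] wQ unfolding VI_sol_def by blast
    show "0 \<le> (F ?y - F w) \<bullet> (?y - w)" using F_mono x_in wQ by blast
    show "0 \<le> F w \<bullet> (?y - w)" using wV x_in unfolding VI_sol_def by blast
    show "P ?y \<bullet> (w - ?y) \<le> phi w - phi ?y" using subgradient x_in wQ by blast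
  qed
  moreover have "infdist ?y minimizers \<le> norm (?y - w)"
    using infdist_le[OF w(1), of ?y] by (simp add: dist_norm)
  then have "(infdist ?y minimizers)^2 \<le> norm (?y - w)^2"
    using power_mono[OF _ infdist_nonneg] by blast
  ultimately show ?thesis using w(2) wV(2) by (simp add: dist_norm)
qed

lemma step_nearly_solves_VI:
  assumes P_bound: "\<forall>y\<in>Q. norm (P y) \<le> B" and diam: "\<forall>u\<in>Q. \<forall>v\<in>Q. norm (u - v) \<le> D"
    and "z \<in> Q"
  shows "- ((e n * B + tau * norm (x (Suc n) - x n)) * D) \<le> F (x (Suc n)) \<bullet> (z - x (Suc n))"
proof -
  let ?y = "x (Suc n)"
  have "0 \<le> F ?y \<bullet> (z - ?y) + e n * (P ?y \<bullet> (z - ?y)) + tau * ((?y - x n) \<bullet> (z - ?y))"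
    using step[of n] assms(3) unfolding VI_sol_def by (simp add: inner_add_left)
  moreover have "P ?y \<bullet> (z - ?y) \<le> norm (P ?y) * norm (z - ?y)"
    "(?y - x n) \<bullet> (z - ?y) \<le> norm (?y - x n) * norm (z - ?y)"
    by (simp_all add: norm_cauchy_schwarz)
  moreover have "norm (P ?y) * norm (z - ?y) \<le> B * D" "norm (?y - x n) * norm (z - ?y) \<le> norm (?y - x n) * D"
    using P_bound diam x_in assms(3) by (auto intro!: mult_mono order_trans[OF norm_ge_zero])
  ultimately have "0 \<le> F ?y \<bullet> (z - ?y) + e n * (B * D) + tau * (norm (?y - x n) * D)"
    using e_pos[of n] tau_pos
    by (smt (verit, best) mult_left_mono)
  then show ?thesis by (simp add: algebra_simps)
qed

text \<open>A long step pays for itself through the term \<open>norm (x (Suc n) - x n)^2\<close>; a short step with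
  \<open>phi\<close> nearly optimal nearly solves the VI, so it lands near the minimizers; otherwise
  \<open>phi (x (Suc n)) > opt + \<eta>\<close> drives the decrease.\<close>
lemma descent_or_near_minimizers:
  assumes "\<delta> > 0"
  obtains c N where "c > 0" and "\<And>n. n \<ge> N \<Longrightarrow> (infdist (x (Suc n)) minimizers)^2 < \<delta>^2 \<or>
      (infdist (x (Suc n)) minimizers)^2 \<le> (infdist (x n) minimizers)^2 - c * e n"
proof -
  obtain \<eta> where \<eta>: "\<eta> > 0" and near: "\<And>y. y \<in> Q \<Longrightarrow> phi y \<le> opt + \<eta> \<Longrightarrow>
      \<forall>z\<in>Q. - \<eta> \<le> F y \<bullet> (z - y) \<Longrightarrow> infdist y minimizers < \<delta>"
    using near_solutions_near_minimizers[OF assms] by blast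
  obtain R where R: "R > 0" "\<forall>y\<in>Q. norm y \<le> R"
    using compact_imp_bounded[OF compact_Q] bounded_pos by blast
  have diam: "\<forall>u\<in>Q. \<forall>v\<in>Q. norm (u - v) \<le> 2 * R"
    using R by (smt (verit) norm_triangle_ineq4)
  obtain B where B: "B > 0" "\<forall>y\<in>Q. norm (P y) \<le> B"
    using compact_imp_bounded[OF compact_continuous_image[OF P_cont compact_Q]]
    unfolding bounded_pos by auto
  have "Q \<noteq> {}" using VI_sol_ne VI_sol_subset by blast
  then obtain q where "q \<in> Q" and q: "\<forall>y\<in>Q. phi q \<le> phi y"
    using continuous_attains_inf[OF compact_Q _ phi_cont] by blast
  define K where "K = opt - phi q"
  have "K \<ge> 0"
    using minimizers_nonempty minimizers_phi VI_sol_subset q unfolding K_def by fastforce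
  define \<rho> where "\<rho> = \<eta> / (2 * tau * (2 * R))"
  define \<epsilon> where "\<epsilon> = min (\<eta> / (2 * B * (2 * R))) (\<rho>^2 * tau / (2 * \<eta> + 2 * K))"
  have "\<rho> > 0" "\<epsilon> > 0" using \<eta> R B tau_pos \<open>K \<ge> 0\<close> by (simp_all add: \<rho>_def \<epsilon>_def)
  then obtain N where N: "\<And>n. n \<ge> N \<Longrightarrow> e n < \<epsilon>"
    using order_tendstoD(2)[OF e_lim] unfolding eventually_sequentially by blast
  define c where "c = 2 * \<eta> / tau"
  show ?thesis
  proof (rule that)
    show "c > 0" using \<eta> tau_pos by (simp add: c_def)
    fix n assume "n \<ge> N"
    let ?y = "x (Suc n)" and ?a = "\<lambda>k. (infdist (x k) minimizers)^2"
    have e: "0 < e n" "e n * B * (2 * R) \<le> \<eta> / 2" "e n * (2 * \<eta> + 2 * K) \<le> \<rho>^2 * tau"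
      using e_pos[of n] N[OF \<open>n \<ge> N\<close>] \<eta> B R tau_pos \<open>K \<ge> 0\<close>
      by (simp_all add: \<epsilon>_def field_simps)
    consider "\<rho> < norm (?y - x n)" | "norm (?y - x n) \<le> \<rho>" "phi ?y \<le> opt + \<eta>"
      | "opt + \<eta> < phi ?y"
      by linarith
    then show "?a (Suc n) < \<delta>^2 \<or> ?a (Suc n) \<le> ?a n - c * e n"
    proof cases
      case 1
      have "\<rho>^2 \<le> norm (?y - x n)^2" using 1 \<open>\<rho> > 0\<close> by (simp add: power_mono)
      moreover have "opt - phi ?y \<le> K" using q x_in unfolding K_def by fastforce
      then have "2 * e n / tau * (opt - phi ?y) \<le> 2 * e n / tau * K"
        using e(1) tau_pos by (intro mult_left_mono) auto
      then have "- (2 * e n / tau * (phi ?y - opt)) \<le> 2 * e n / tau * K"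
        by (metis minus_diff_eq mult_minus_right)
      moreover have "c * e n + 2 * e n / tau * K \<le> \<rho>^2"
        using e(3) tau_pos by (simp add: c_def field_simps)
      ultimately show ?thesis using infdist_descent[of n] by linarith
    next
      case 2
      have "- \<eta> \<le> F ?y \<bullet> (z - ?y)" if "z \<in> Q" for z
      proof -
        have "(e n * B + tau * norm (?y - x n)) * (2 * R) \<le> (e n * B + tau * \<rho>) * (2 * R)"
          using 2(1) tau_pos R by (simp add: mult_right_mono)
        also have "\<dots> \<le> \<eta>" using e(2) tau_pos R by (simp add: \<rho>_def field_simps)
        finally show ?thesis using step_nearly_solves_VI[OF B(2) diam that, of n] by linarith
      qed
      then have "infdist ?y minimizers < \<delta>" using near[OF x_in 2(2)] by blast
      then have "?a (Suc n) < \<delta>^2" by (rule power_strict_mono[OF _ infdist_nonneg]) simp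
      then show ?thesis ..
    next
      case 3
      have "c * e n = 2 * e n / tau * \<eta>" by (simp add: c_def field_simps)
      also have "\<dots> \<le> 2 * e n / tau * (phi ?y - opt)"
        using 3 e(1) tau_pos by (intro mult_left_mono) auto
      finally have "c * e n \<le> 2 * e n / tau * (phi ?y - opt)" .
      then show ?thesis using infdist_descent[of n] by (smt (verit) zero_le_power2)
    qed
  qed
qed

lemma infdist_minimizers_tendsto_0: "(\<lambda>n. infdist (x n) minimizers) \<longlonglongrightarrow> 0"
proof (rule LIMSEQ_I)
  fix \<delta> :: real assume "\<delta> > 0"
  then obtain c N where "c > 0" and "\<And>n. n \<ge> N \<Longrightarrow> (infdist (x (Suc n)) minimizers)^2 < \<delta>^2 \<or>
      (infdist (x (Suc n)) minimizers)^2 \<le> (infdist (x n) minimizers)^2 - c * e n"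
    using descent_or_near_minimizers by metis
  then obtain M where "\<forall>n\<ge>M. (infdist (x n) minimizers)^2 < \<delta>^2"
    using eventually_below_of_descent[of "\<lambda>n. (infdist (x n) minimizers)^2" c e N] e_pos e_sum
    by (meson less_imp_le zero_le_power2)
  then show "\<exists>M. \<forall>n\<ge>M. norm (infdist (x n) minimizers - 0) < \<delta>"
    using \<open>\<delta> > 0\<close> by (metis abs_of_nonneg diff_zero infdist_nonneg less_imp_le
        power2_less_imp_less real_norm_def)
qed

theorem limit_point_minimizes:
  assumes "strict_mono r" and "(x \<circ> r) \<longlonglongrightarrow> z"
  shows "z \<in> VI_sol Q F \<and> (\<forall>w\<in>VI_sol Q F. phi z \<le> phi w)"
proof -
  have "(\<lambda>k. infdist (x (r k)) minimizers) \<longlonglongrightarrow> infdist z minimizers"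
    using assms(2) by (intro tendsto_intros) (simp add: o_def)
  moreover have "(\<lambda>k. infdist (x (r k)) minimizers) \<longlonglongrightarrow> 0"
    using LIMSEQ_subseq_LIMSEQ[OF infdist_minimizers_tendsto_0 assms(1)] by (simp add: o_def)
  ultimately have "infdist z minimizers = 0" using LIMSEQ_unique by blast
  then have "z \<in> minimizers"
    using in_closed_iff_infdist_zero[OF closed_minimizers minimizers_nonempty] by blast
  then show ?thesis using minimizers_phi opt_le by auto
qed

end

lemma proj_nth: "proj blk i x $ k = (if blk k = i then x $ k else 0)"
  by (simp add: proj_def)

lemma upd_nth: "upd blk x i y $ k = (if blk k = i then y $ k else x $ k)"
  by (simp add: upd_def)

lemma linear_proj: "linear (proj blk i)"
  by (rule linearI) (auto simp: vec_eq_iff proj_nth)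

lemma bounded_linear_proj: "bounded_linear (proj blk i)"
  by (rule linear_proj[unfolded linear_conv_bounded_linear])

lemma proj_diff: "proj blk i (a - b) = proj blk i a - proj blk i b"
  by (auto simp: vec_eq_iff proj_nth)

lemma proj_proj [simp]: "proj blk i (proj blk i x) = proj blk i x"
  by (auto simp: vec_eq_iff proj_nth)

lemma upd_eq: "upd blk x i y = x - proj blk i x + proj blk i y"
  by (auto simp: vec_eq_iff proj_nth upd_nth)

lemma upd_proj_self: "upd blk x i (proj blk i x) = x"
  by (auto simp: vec_eq_iff proj_nth upd_nth)

lemma proj_upd: "y \<in> block_set blk i \<Longrightarrow> proj blk j (upd blk x i y) = (if j = i then y else proj blk j x)"
  by (auto simp: vec_eq_iff proj_nth upd_nth block_set_def)

lemma upd_minus: "upd blk x i y - x = proj blk i (y - x)"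
  by (auto simp: vec_eq_iff proj_nth upd_nth)

lemma sum_proj:
  fixes blk :: "'n::finite \<Rightarrow> 'p::finite"
  shows "(\<Sum>i\<in>UNIV. proj blk i x) = x"
  by (simp add: vec_eq_iff sum_component proj_nth sum.delta')

lemma inner_proj: "u \<bullet> proj blk i v = proj blk i u \<bullet> v"
  unfolding inner_vec_def by (rule sum.cong) (auto simp: proj_nth)

lemma pseudo_grad_inner_proj: "pseudo_grad blk g x \<bullet> proj blk i v = g i x \<bullet> proj blk i v"
  unfolding inner_vec_def pseudo_grad_def by (intro sum.cong) (auto simp: proj_nth)

lemma pseudo_grad_inner:
  fixes blk :: "'n::finite \<Rightarrow> 'p::finite"
  shows "pseudo_grad blk g x \<bullet> v = (\<Sum>i\<in>UNIV. g i x \<bullet> proj blk i v)"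
proof -
  have "pseudo_grad blk g x \<bullet> v = (\<Sum>i\<in>UNIV. pseudo_grad blk g x \<bullet> proj blk i v)"
    by (metis inner_sum_right sum_proj)
  then show ?thesis by (simp add: pseudo_grad_inner_proj)
qed

lemma upd_in_prodQ:
  assumes "x \<in> prodQ blk Qi" "y \<in> Qi i" "Qi i \<subseteq> block_set blk i"
  shows "upd blk x i y \<in> prodQ blk Qi"
  using assms by (auto simp: prodQ_def proj_upd)

lemma closed_convex_prodQ:
  assumes "Assumption1 blk Qi f"
  shows "closed (prodQ blk Qi)" and "convex (prodQ blk Qi)"
proof -
  have eq: "prodQ blk Qi = (\<Inter>i. proj blk i -` Qi i)" unfolding prodQ_def by auto
  have "closed (Qi i)" "convex (Qi i)" for i using assms unfolding Assumption1_def by auto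
  then show "closed (prodQ blk Qi)" "convex (prodQ blk Qi)" unfolding eq
    by (auto intro!: closed_INT convex_INT convex_linear_vimage linear_proj
        continuous_closed_vimage linear_continuous_at bounded_linear_proj)
qed

lemma has_derivative_upd:
  assumes "(h has_derivative (\<lambda>v. g \<bullet> v)) (at x)"
  shows "((\<lambda>y. h (upd blk x i y)) has_derivative (\<lambda>v. g \<bullet> proj blk i v)) (at (proj blk i x))"
proof -
  have "((\<lambda>y. x - proj blk i x + proj blk i y) has_derivative proj blk i) (at (proj blk i x))"
    by (auto intro!: derivative_eq_intros bounded_linear.has_derivative[OF bounded_linear_proj])
  from has_derivative_compose[OF this] show ?thesis
    using assms by (simp add: upd_eq o_def)
qed

text \<open>Each player's first-order condition is the restriction of the VI to deviations in that
  player's own block.\<close>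
lemma is_NE_iff_VI_sol:
  fixes blk :: "'n::finite \<Rightarrow> 'p::finite"
  assumes A1: "Assumption1 blk Qi h"
    and der: "\<And>i x. x \<in> prodQ blk Qi \<Longrightarrow> (h i has_derivative (\<lambda>v. g i x \<bullet> v)) (at x)"
  shows "is_NE blk Qi h x \<longleftrightarrow> x \<in> VI_sol (prodQ blk Qi) (pseudo_grad blk g)"
proof
  have Qi: "convex (Qi i)" "Qi i \<subseteq> block_set blk i" for i using A1 unfolding Assumption1_def by auto
  have partial_der: "((\<lambda>y. h i (upd blk x i y)) has_derivative (\<lambda>v. g i x \<bullet> proj blk i v)) (at (proj blk i x))"
    if "x \<in> prodQ blk Qi" for i using has_derivative_upd[OF der[OF that]] .
  {
    assume NE: "is_NE blk Qi h x"
    then have x: "x \<in> prodQ blk Qi" unfolding is_NE_def by blast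
    have "0 \<le> g i x \<bullet> proj blk i (z - x)" if "z \<in> prodQ blk Qi" for i z
    proof -
      have "0 \<le> g i x \<bullet> proj blk i (proj blk i z - proj blk i x)"
        using NE x that unfolding is_NE_def prodQ_def
        by (intro min_on_convex_derivative_nonneg[OF Qi(1) _ _ _ partial_der[OF x]])
           (auto simp: upd_proj_self)
      then show ?thesis by (simp add: proj_diff)
    qed
    then show "x \<in> VI_sol (prodQ blk Qi) (pseudo_grad blk g)"
      using x by (simp add: VI_sol_def pseudo_grad_inner sum_nonneg)
  }
  assume VI: "x \<in> VI_sol (prodQ blk Qi) (pseudo_grad blk g)"
  then have x: "x \<in> prodQ blk Qi" unfolding VI_sol_def by blast
  have "h i x \<le> h i (upd blk x i y)" if y: "y \<in> Qi i" for i y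
  proof -
    have "0 \<le> pseudo_grad blk g x \<bullet> (upd blk x i y - x)"
      using VI upd_in_prodQ[OF x y Qi(2)] unfolding VI_sol_def by blast
    also have "\<dots> = g i x \<bullet> proj blk i (y - proj blk i x)"
      by (simp only: upd_minus pseudo_grad_inner_proj) (simp add: proj_diff)
    also have "\<dots> \<le> h i (upd blk x i y) - h i (upd blk x i (proj blk i x))"
      using A1 x y unfolding Assumption1_def prodQ_def
      by (intro convex_on_gradient_ineq[OF _ _ _ partial_der[OF x]]) auto
    finally show ?thesis by (simp add: upd_proj_self)
  qed
  then show "is_NE blk Qi h x" using x unfolding is_NE_def by blast
qed

lemma pert_game_has_derivative:
  assumes f: "(f i has_derivative (\<lambda>v. g \<bullet> v)) (at x)"
    and phi: "(phi has_derivative (\<lambda>v. gp \<bullet> v)) (at x)"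
  shows "(pert_game blk f phi tau e y i has_derivative
     (\<lambda>v. (g + e *\<^sub>R gp + tau *\<^sub>R (proj blk i x - proj blk i y)) \<bullet> v)) (at x)"
proof -
  let ?p = "\<lambda>x. proj blk i x - proj blk i y"
  have "(?p has_derivative (\<lambda>v. proj blk i v - 0)) (at x)"
    by (intro has_derivative_diff bounded_linear.has_derivative[OF bounded_linear_proj]
        has_derivative_ident has_derivative_const)
  then have p: "(?p has_derivative proj blk i) (at x)" by simp
  have "((\<lambda>x. ?p x \<bullet> ?p x) has_derivative (\<lambda>v. ?p x \<bullet> proj blk i v + proj blk i v \<bullet> ?p x)) (at x)"
    by (rule has_derivative_inner[OF p p])
  moreover have "?p x \<bullet> proj blk i v = ?p x \<bullet> v" for v
    by (simp only: inner_proj proj_diff proj_proj)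
  ultimately have "((\<lambda>x. ?p x \<bullet> ?p x) has_derivative (\<lambda>v. 2 * (?p x \<bullet> v))) (at x)"
    by (simp add: inner_commute)
  from has_derivative_add[OF has_derivative_add[OF f has_derivative_mult_right[OF phi]]
      has_derivative_mult_right[OF this, of "tau / 2"]]
  show ?thesis
    unfolding pert_game_def power2_norm_eq_inner
    by (rule has_derivative_eq_rhs) (simp add: fun_eq_iff algebra_simps inner_add_left)
qed

lemma is_NE_pert_game_iff:
  fixes blk :: "'n::finite \<Rightarrow> 'p::finite"
  assumes A1: "Assumption1 blk Qi (pert_game blk f phi tau e y)"
    and f: "\<And>i x. x \<in> prodQ blk Qi \<Longrightarrow> (f i has_derivative (\<lambda>v. g i x \<bullet> v)) (at x)"
    and phi: "\<And>x. x \<in> prodQ blk Qi \<Longrightarrow> (phi has_derivative (\<lambda>v. gp x \<bullet> v)) (at x)"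
  shows "is_NE blk Qi (pert_game blk f phi tau e y) x \<longleftrightarrow>
    x \<in> VI_sol (prodQ blk Qi) (\<lambda>z. pseudo_grad blk g z + e *\<^sub>R gp z + tau *\<^sub>R (z - y))"
proof -
  have "pseudo_grad blk (\<lambda>i z. g i z + e *\<^sub>R gp z + tau *\<^sub>R (proj blk i z - proj blk i y))
      = (\<lambda>z. pseudo_grad blk g z + e *\<^sub>R gp z + tau *\<^sub>R (z - y))"
    by (simp add: fun_eq_iff vec_eq_iff pseudo_grad_def proj_nth)
  then show ?thesis
    using is_NE_iff_VI_sol[OF A1 pert_game_has_derivative[OF f phi]] by simp
qed

lemma Assumption2_gradient:
  assumes "Assumption2 blk Qi h"
  obtains g where "\<And>i x. x \<in> prodQ blk Qi \<Longrightarrow> (h i has_derivative (\<lambda>v. g i x \<bullet> v)) (at x)"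
    and "\<And>i. bounded (g i ` prodQ blk Qi)"
proof -
  obtain U g H where "prodQ blk Qi \<subseteq> U" "has_grads_hess U h g H" "\<forall>i. bounded (g i ` prodQ blk Qi)"
    using assms unfolding Assumption2_def by blast
  then show ?thesis using that unfolding has_grads_hess_def has_grads_def by blast
qed

lemma norm_le_of_two_perturbations:
  fixes g q p :: "'a::real_normed_vector"
  assumes "norm (g + a *\<^sub>R q + tau *\<^sub>R p) \<le> B1" "norm (g + b *\<^sub>R q + tau *\<^sub>R p) \<le> B2"
    and "norm g \<le> B0" and "a \<noteq> b" and "tau > 0"
  shows "norm p \<le> ((\<bar>b\<bar> * B1 + \<bar>a\<bar> * B2) / \<bar>b - a\<bar> + B0) / tau"
proof -
  define u v where "u = g + a *\<^sub>R q + tau *\<^sub>R p" and "v = g + b *\<^sub>R q + tau *\<^sub>R p"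
  have "b *\<^sub>R u - a *\<^sub>R v = (b - a) *\<^sub>R (g + tau *\<^sub>R p)"
    by (simp add: u_def v_def algebra_simps)
  then have "g + tau *\<^sub>R p = (1 / (b - a)) *\<^sub>R (b *\<^sub>R u - a *\<^sub>R v)"
    using \<open>a \<noteq> b\<close> by simp
  then have eq: "tau *\<^sub>R p = (1 / (b - a)) *\<^sub>R (b *\<^sub>R u - a *\<^sub>R v) - g"
    by (simp add: algebra_simps)
  have "norm (b *\<^sub>R u - a *\<^sub>R v) \<le> norm (b *\<^sub>R u) + norm (a *\<^sub>R v)"
    by (rule norm_triangle_ineq4)
  also have "\<dots> \<le> \<bar>b\<bar> * B1 + \<bar>a\<bar> * B2"
    using assms(1,2) by (simp add: u_def v_def add_mono mult_left_mono)
  finally have "norm ((1 / (b - a)) *\<^sub>R (b *\<^sub>R u - a *\<^sub>R v)) \<le> (\<bar>b\<bar> * B1 + \<bar>a\<bar> * B2) / \<bar>b - a\<bar>"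
    by (simp add: divide_right_mono)
  then have "norm (tau *\<^sub>R p) \<le> (\<bar>b\<bar> * B1 + \<bar>a\<bar> * B2) / \<bar>b - a\<bar> + B0"
    unfolding eq using assms(3) norm_triangle_ineq4 by (smt (verit))
  then show ?thesis using assms(5) by (simp add: field_simps)
qed

text \<open>Assumption 2 for a perturbed game bounds its gradients
  \<open>\<nabla>f\<^sub>i + e \<nabla>phi + tau (x\<^sub>i - y\<^sub>i)\<close> on \<open>Q\<close>; two distinct weights \<open>e\<close> eliminate the unknown
  \<open>\<nabla>phi\<close>, which bounds every block \<open>x\<^sub>i\<close>.\<close>
lemma bounded_prodQ:
  fixes blk :: "'n::finite \<Rightarrow> 'p::finite"
  assumes A2: "Assumption2 blk Qi f"
    and phi: "\<And>x. x \<in> prodQ blk Qi \<Longrightarrow> (phi has_derivative (\<lambda>v. gp x \<bullet> v)) (at x)"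
    and pert: "Assumption2 blk Qi (pert_game blk f phi tau a y)"
      "Assumption2 blk Qi (pert_game blk f phi tau b y)"
    and "a \<noteq> b" and "tau > 0"
  shows "bounded (prodQ blk Qi)"
proof -
  let ?Q = "prodQ blk Qi"
  obtain g where g: "\<And>i x. x \<in> ?Q \<Longrightarrow> (f i has_derivative (\<lambda>v. g i x \<bullet> v)) (at x)"
    and g_bd: "\<And>i. bounded (g i ` ?Q)"
    using Assumption2_gradient[OF A2] by blast
  have pert_bd: "\<exists>B. \<forall>x\<in>?Q. norm (g i x + c *\<^sub>R gp x + tau *\<^sub>R (proj blk i x - proj blk i y)) \<le> B"
    if A2c: "Assumption2 blk Qi (pert_game blk f phi tau c y)" for c i
  proof -
    obtain h where h: "\<And>i x. x \<in> ?Q \<Longrightarrow>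
        (pert_game blk f phi tau c y i has_derivative (\<lambda>v. h i x \<bullet> v)) (at x)"
      and h_bd: "\<And>i. bounded (h i ` ?Q)"
      using Assumption2_gradient[OF A2c] by blast
    have "h i x = g i x + c *\<^sub>R gp x + tau *\<^sub>R (proj blk i x - proj blk i y)" if "x \<in> ?Q" for x
      using has_derivative_inner_unique[OF h[OF that] pert_game_has_derivative[OF g[OF that] phi[OF that]]] .
    then show ?thesis using h_bd[of i] unfolding bounded_iff by (metis image_eqI)
  qed
  have "\<exists>K. \<forall>x\<in>?Q. norm (proj blk i x) \<le> K" for i
  proof -
    obtain B0 where B0: "\<forall>x\<in>?Q. norm (g i x) \<le> B0" using g_bd[of i] unfolding bounded_iff by blast
    obtain B1 B2 where
      "\<forall>x\<in>?Q. norm (g i x + a *\<^sub>R gp x + tau *\<^sub>R (proj blk i x - proj blk i y)) \<le> B1"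
      "\<forall>x\<in>?Q. norm (g i x + b *\<^sub>R gp x + tau *\<^sub>R (proj blk i x - proj blk i y)) \<le> B2"
      using pert_bd[OF pert(1)] pert_bd[OF pert(2)] by blast
    then have "norm (proj blk i x - proj blk i y) \<le> ((\<bar>b\<bar> * B1 + \<bar>a\<bar> * B2) / \<bar>b - a\<bar> + B0) / tau"
      if "x \<in> ?Q" for x
      using norm_le_of_two_perturbations B0 that assms(5,6) by blast
    then show ?thesis by (metis norm_triangle_sub add.commute order_trans add_right_mono)
  qed
  then obtain K where K: "\<And>i x. x \<in> ?Q \<Longrightarrow> norm (proj blk i x) \<le> K i" by metis
  have "norm x \<le> (\<Sum>i\<in>UNIV. K i)" if "x \<in> ?Q" for x
    using norm_sum[of "\<lambda>i. proj blk i x" UNIV] sum_mono[of UNIV "\<lambda>i. norm (proj blk i x)" K] K[OF that]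
    by (simp add: sum_proj)
  then show ?thesis unfolding bounded_iff by blast
qed

lemma VI_sol_regularized_ex1:
  fixes F P :: "'a::euclidean_space \<Rightarrow> 'a"
  assumes "compact Q" "convex Q" "Q \<noteq> {}" and "continuous_on Q F" "continuous_on Q P"
    and "\<forall>a\<in>Q. \<forall>b\<in>Q. 0 \<le> (F a - F b) \<bullet> (a - b)" "\<forall>a\<in>Q. \<forall>b\<in>Q. 0 \<le> (P a - P b) \<bullet> (a - b)"
    and "e \<ge> 0" "tau > 0"
  shows "\<exists>!x. x \<in> VI_sol Q (\<lambda>z. F z + e *\<^sub>R P z + tau *\<^sub>R (z - y))"
proof -
  have "continuous_on Q (\<lambda>z. F z + e *\<^sub>R P z + tau *\<^sub>R (z - y))"
    using assms(4,5) by (intro continuous_intros)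
  then obtain x where "x \<in> VI_sol Q (\<lambda>z. F z + e *\<^sub>R P z + tau *\<^sub>R (z - y))"
    using VI_sol_nonempty[OF assms(1-3)] by blast
  moreover note VI_sol_unique[OF assms(9) strongly_monotone_regularized[OF assms(6-8)]]
  ultimately show ?thesis by blast
qed

lemma monotone_NEP_pseudo_grad:
  assumes "monotone_NEP blk Qi f"
  obtains g where "\<And>i x. x \<in> prodQ blk Qi \<Longrightarrow> (f i has_derivative (\<lambda>v. g i x \<bullet> v)) (at x)"
    and "continuous_on (prodQ blk Qi) (pseudo_grad blk g)"
    and "\<forall>a\<in>prodQ blk Qi. \<forall>b\<in>prodQ blk Qi.
           0 \<le> (pseudo_grad blk g a - pseudo_grad blk g b) \<bullet> (a - b)"
proof -
  obtain U g where U: "prodQ blk Qi \<subseteq> U" "has_grads U f g"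
    and "\<forall>a\<in>prodQ blk Qi. \<forall>b\<in>prodQ blk Qi.
           0 \<le> (pseudo_grad blk g a - pseudo_grad blk g b) \<bullet> (a - b)"
    using assms unfolding monotone_NEP_def by blast
  moreover have "continuous_on (prodQ blk Qi) (pseudo_grad blk g)"
    using U unfolding has_grads_def pseudo_grad_def
    by (auto intro!: continuous_on_vec_lambda continuous_on_component intro: continuous_on_subset)
  ultimately show ?thesis using that U unfolding has_grads_def by blast
qed

theorem mainTheorem10:
  fixes blk :: "'n::finite \<Rightarrow> 'p::finite"
    and Qi :: "'p \<Rightarrow> (real^'n) set"
    and f :: "'p \<Rightarrow> real^'n \<Rightarrow> real"
    and phi :: "real^'n \<Rightarrow> real"
    and L_phi tau :: real
    and eps :: "nat \<Rightarrow> real"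
    and x0 :: "real^'n"
  assumes blocks: "\<forall>i. \<exists>k. blk k = i"
    and mono: "monotone_NEP blk Qi f"
    and A2: "Assumption2 blk Qi f"
    and sol_ne: "SOL blk Qi f \<noteq> {}"
    and phi_C1: "\<exists>U gphi. open U \<and> prodQ blk Qi \<subseteq> U \<and>
        (\<forall>x\<in>U. (phi has_derivative (\<lambda>h. gphi x \<bullet> h)) (at x)) \<and> continuous_on U gphi \<and>
        (\<forall>x\<in>prodQ blk Qi. \<forall>y\<in>prodQ blk Qi. norm (gphi x - gphi y) \<le> L_phi * norm (x - y))"
    and phi_convex: "convex_on (prodQ blk Qi) phi"
    and phi_level: "\<forall>c. bounded {x \<in> SOL blk Qi f. phi x \<le> c}"
    and tau_pos: "tau > 0"
    and PU: "\<forall>n. \<forall>y\<in>prodQ blk Qi. PUps_NEP blk Qi (pert_game blk f phi tau (eps n) y)"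
    and eps_pos: "\<forall>n. eps n > 0"
    and eps_dec: "decseq eps"
    and eps_lim: "eps \<longlonglongrightarrow> 0"
    and eps_sum: "filterlim (\<lambda>N. \<Sum>n<N. eps n) at_top sequentially"
    and x0: "x0 \<in> prodQ blk Qi"
  shows "(\<exists>!x. x 0 = x0 \<and> (\<forall>n. is_NE blk Qi (pert_game blk f phi tau (eps n) (x n)) (x (Suc n))))
       \<and> (\<forall>x. x 0 = x0 \<and> (\<forall>n. is_NE blk Qi (pert_game blk f phi tau (eps n) (x n)) (x (Suc n)))
            \<longrightarrow> bounded (range x) \<and>
                (\<forall>z. (\<exists>r. strict_mono r \<and> (x \<circ> r) \<longlonglongrightarrow> z) \<longrightarrow>
                     z \<in> SOL blk Qi f \<and> (\<forall>w \<in> SOL blk Qi f. phi z \<le> phi w)))"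
proof -
  let ?Q = "prodQ blk Qi"
    and ?R = "\<lambda>n y. is_NE blk Qi (pert_game blk f phi tau (eps n) y)"
  have A1: "Assumption1 blk Qi f" using mono unfolding monotone_NEP_def by blast
  obtain gg where f_der: "\<And>i x. x \<in> ?Q \<Longrightarrow> (f i has_derivative (\<lambda>v. gg i x \<bullet> v)) (at x)"
    and F_cont: "continuous_on ?Q (pseudo_grad blk gg)"
    and F_mono: "\<forall>a\<in>?Q. \<forall>b\<in>?Q. 0 \<le> (pseudo_grad blk gg a - pseudo_grad blk gg b) \<bullet> (a - b)"
    using monotone_NEP_pseudo_grad[OF mono] by blast
  let ?F = "pseudo_grad blk gg"
  have SOL: "SOL blk Qi f = VI_sol ?Q ?F"
    using is_NE_iff_VI_sol[OF A1 f_der] unfolding SOL_def by blast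
  obtain gphi where phi_der: "\<And>x. x \<in> ?Q \<Longrightarrow> (phi has_derivative (\<lambda>v. gphi x \<bullet> v)) (at x)"
    and gphi_cont: "continuous_on ?Q gphi"
    using phi_C1 continuous_on_subset by blast
  have phi_cont: "continuous_on ?Q phi"
    using phi_der has_derivative_continuous by (blast intro: continuous_at_imp_continuous_on)
  have subgrad: "\<forall>a\<in>?Q. \<forall>b\<in>?Q. gphi a \<bullet> (b - a) \<le> phi b - phi a"
    using convex_on_gradient_ineq[OF phi_convex] phi_der by blast
  \<comment> \<open>Compactness of \<open>Q\<close> makes the hypotheses on level sets, on the monotonicity of \<open>eps\<close> and
    on the Lipschitz constant unnecessary.\<close>
  obtain m where "eps m < eps 0"
    using order_tendstoD(2)[OF eps_lim eps_pos[rule_format, of 0]] by (auto simp: eventually_sequentially)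
  with bounded_prodQ[OF A2 phi_der] PU x0 tau_pos closed_convex_prodQ[OF A1]
  have Q: "compact ?Q" "convex ?Q"
    unfolding PUps_NEP_def compact_eq_bounded_closed by (metis less_irrefl)+
  have NE_iff: "?R n y x' \<longleftrightarrow> x' \<in> VI_sol ?Q (\<lambda>z. ?F z + eps n *\<^sub>R gphi z + tau *\<^sub>R (z - y))"
    if "y \<in> ?Q" for n y x'
    using PU that unfolding PUps_NEP_def by (intro is_NE_pert_game_iff f_der phi_der) auto
  have ex1: "\<exists>!x'. ?R n y x'" if "y \<in> ?Q" for n y
    using VI_sol_regularized_ex1[OF Q _ F_cont gphi_cont F_mono _ less_imp_le tau_pos]
      subgradient_monotone[OF subgrad] eps_pos x0 NE_iff[OF that] by blast
  have R_in: "?R n y x' \<Longrightarrow> x' \<in> ?Q" for n y x' unfolding is_NE_def by blast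
  have "bounded (range x) \<and> (\<forall>z. (\<exists>r. strict_mono r \<and> (x \<circ> r) \<longlonglongrightarrow> z) \<longrightarrow>
      z \<in> SOL blk Qi f \<and> (\<forall>w \<in> SOL blk Qi f. phi z \<le> phi w))"
    if x: "x 0 = x0 \<and> (\<forall>n. ?R n (x n) (x (Suc n)))" for x
  proof -
    have x_in: "x n \<in> ?Q" for n using x x0 R_in by (cases n) auto
    interpret regularized_prox_sequence ?Q ?F gphi phi tau eps x
      using Q F_cont F_mono phi_cont gphi_cont subgrad sol_ne SOL tau_pos eps_pos eps_lim eps_sum
        x_in x NE_iff
      by unfold_locales auto
    show ?thesis
      using compact_imp_bounded[OF Q(1)] x_in limit_point_minimizes SOL by (auto intro: bounded_subset)
  qed
  moreover have "\<exists>!x. x 0 = x0 \<and> (\<forall>n. ?R n (x n) (x (Suc n)))"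
    by (rule ex1_recursive_sequence[of _ _ "\<lambda>n y. is_NE blk Qi (pert_game blk f phi tau (eps n) y)",
          OF x0 ex1 R_in])
  ultimately show ?thesis by blast
qed

end
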